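(* Let $x_0>0$, $y_0>0$ with $x_0\neq y_0$. Then for every $T>0$ there exists a solution $(x,y)\in C^1([0,T])^2$ of the system \[ \dot x(t)=x(t)-\max_{s\in[0,t]}y(s),\qquad \dot y(t)=y(t)-\max_{s\in[0,t]}x(s),\quad t\in[0,T],\qquad x(0)=x_0,\ y(0)=y_0. \] *)

theory Defs
  imports "HOL-Analysis.Analysis"
begin

definition C1_on_with_deriv :: "real \<Rightarrow> real \<Rightarrow> (real \<Rightarrow> real) \<Rightarrow> (real \<Rightarrow> real) \<Rightarrow> bool" where
  "C1_on_with_deriv a b f f' \<longleftrightarrow>
     (\<forall>t\<in>{a..b}. (f has_real_derivative f' t) (at t within {a..b})) \<and> continuous_on {a..b} f'"

end

theory Submission
  imports Defs
begin

text \<open>The solution can be written down in closed form: for \<open>y\<^sub>0 \<le> x\<^sub>0\<close> and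
\<open>d = x\<^sub>0 - y\<^sub>0\<close>, the functions \<open>x t = y\<^sub>0 + d e\<^sup>t\<close> and \<open>y t = y\<^sub>0 - d t e\<^sup>t\<close> solve the
system on \<open>[0, \<infinity>)\<close>. Since \<open>x\<close> is increasing and \<open>y\<close> is decreasing there, the running
maxima are \<open>x t\<close> and \<open>y\<^sub>0\<close>, and the system reduces to the linear equations
\<open>x' = x - y\<^sub>0\<close>, \<open>y' = y - x\<close>. The case \<open>x\<^sub>0 < y\<^sub>0\<close> follows by swapping the roles of
\<open>x\<close> and \<open>y\<close>, which leaves the system invariant.\<close>

lemma C1_on_with_derivI:
  assumes "\<And>t. (f has_real_derivative f' t) (at t)" and "continuous_on {a..b} f'"
  shows "C1_on_with_deriv a b f f'"
  using assms has_field_derivative_at_within unfolding C1_on_with_deriv_def by blast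

lemma cSup_image_atLeastAtMost_mono_on:
  fixes f :: "'a::linorder \<Rightarrow> 'b::conditionally_complete_lattice"
  assumes "mono_on {a..b} f" and "a \<le> b"
  shows "Sup (f ` {a..b}) = f b"
  using assms by (intro cSup_eq_maximum) (auto intro: mono_onD)

lemma cSup_image_atLeastAtMost_antimono_on:
  fixes f :: "'a::linorder \<Rightarrow> 'b::conditionally_complete_lattice"
  assumes "antimono_on {a..b} f" and "a \<le> b"
  shows "Sup (f ` {a..b}) = f a"
  using assms by (intro cSup_eq_maximum) (auto intro!: monotone_onD[OF assms(1)])

lemma running_max_system_explicit_solution:
  fixes c d T :: real
  assumes "d \<ge> 0"
  defines "x \<equiv> \<lambda>t. c + d * exp t" and "y \<equiv> \<lambda>t. c - d * t * exp t"
  defines "x' \<equiv> \<lambda>t. d * exp t" and "y' \<equiv> \<lambda>t. - d * (1 + t) * exp t"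
  shows "C1_on_with_deriv 0 T x x'" and "C1_on_with_deriv 0 T y y'"
    and "\<forall>t\<in>{0..T}. x' t = x t - Sup (y ` {0..t}) \<and> y' t = y t - Sup (x ` {0..t})"
proof -
  have "(x has_real_derivative x' t) (at t)" for t
    unfolding x_def x'_def by (auto intro!: derivative_eq_intros)
  then show "C1_on_with_deriv 0 T x x'"
    by (rule C1_on_with_derivI) (auto simp: x'_def intro!: continuous_intros)
  have "(y has_real_derivative y' t) (at t)" for t
    unfolding y_def y'_def by (auto intro!: derivative_eq_intros simp: algebra_simps)
  then show "C1_on_with_deriv 0 T y y'"
    by (rule C1_on_with_derivI) (auto simp: y'_def intro!: continuous_intros)
  have "mono_on {0..t} x" for t
    using assms(1) by (auto intro!: mono_onI mult_left_mono simp: x_def)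
  then have sup_x: "Sup (x ` {0..t}) = x t" if "0 \<le> t" for t
    using cSup_image_atLeastAtMost_mono_on that by blast
  have "antimono_on {0..t} y" for t
    using assms(1) by (auto intro!: monotone_onI mult_left_mono mult_mono simp: y_def)
  then have sup_y: "Sup (y ` {0..t}) = c" if "0 \<le> t" for t
    using cSup_image_atLeastAtMost_antimono_on[of 0 t y] that by (simp add: y_def)
  from sup_x sup_y show "\<forall>t\<in>{0..T}. x' t = x t - Sup (y ` {0..t}) \<and> y' t = y t - Sup (x ` {0..t})"
    by (auto simp: x_def y_def x'_def y'_def algebra_simps)
qed

lemma running_max_system_solvable_ordered:
  fixes x0 y0 T :: real
  assumes "y0 \<le> x0"
  shows "\<exists>x y x' y' :: real \<Rightarrow> real.
           C1_on_with_deriv 0 T x x' \<and> C1_on_with_deriv 0 T y y' \<and>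
           (\<forall>t\<in>{0..T}. x' t = x t - Sup (y ` {0..t}) \<and>
                        y' t = y t - Sup (x ` {0..t})) \<and>
           x 0 = x0 \<and> y 0 = y0"
proof -
  define d where "d = x0 - y0"
  have "d \<ge> 0" "x0 = y0 + d" using assms by (auto simp: d_def)
  with running_max_system_explicit_solution[where c = y0 and d = d and T = T] show ?thesis
    by (intro exI[of _ "\<lambda>t. y0 + d * exp t"] exI[of _ "\<lambda>t. y0 - d * t * exp t"]
        exI[of _ "\<lambda>t. d * exp t"] exI[of _ "\<lambda>t. - d * (1 + t) * exp t"]) auto
qed

theorem mainTheorem3:
  fixes x0 y0 T :: real
  assumes "x0 > 0" and "y0 > 0" and "x0 \<noteq> y0" and "T > 0"
  shows "\<exists>x y x' y' :: real \<Rightarrow> real.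
           C1_on_with_deriv 0 T x x' \<and> C1_on_with_deriv 0 T y y' \<and>
           (\<forall>t\<in>{0..T}. x' t = x t - Sup (y ` {0..t}) \<and>
                        y' t = y t - Sup (x ` {0..t})) \<and>
           x 0 = x0 \<and> y 0 = y0"
proof (cases "y0 \<le> x0")
  case True
  then show ?thesis by (rule running_max_system_solvable_ordered)
next
  case False
  then obtain x y x' y' where
    "C1_on_with_deriv 0 T y y'" "C1_on_with_deriv 0 T x x'"
    "\<forall>t\<in>{0..T}. y' t = y t - Sup (x ` {0..t}) \<and> x' t = x t - Sup (y ` {0..t})"
    "x 0 = x0" "y 0 = y0"
    using running_max_system_solvable_ordered[of x0 y0 T] by force
  then show ?thesis by blast
qed

end
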